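(* Let $P=\sum_{i=1}^nx^i\,dx^i\otimes\partial_{x^i}$, i.e. $P=\mathrm{diag}\{x^1,\dots,x^n\}$, on $\mathbb R^n$; it is a Nijenhuis operator on the tangent Lie algebroid $(T_{\mathbb R^n},[-,-],\mathrm{id})$. Then the Frölicher–Nijenhuis cohomology of $P$ vanishes in all degrees: $\mathrm H^k_{\mathrm{FN}}(T_{\mathbb R^n})=0$ for all $k\ge0$, i.e. the complex $(\Omega^\bullet(\mathbb R^n,T_{\mathbb R^n}),d_{\mathrm{FN}}=[P,-]_{\mathrm{FN}})$ is exact.
   Context: $\Omega^k(\mathbb R^n,T_{\mathbb R^n})=\Gamma(\wedge^kT^\vee_{\mathbb R^n}\otimes T_{\mathbb R^n})$ is the space of vector-valued $k$-forms. The Frölicher–Nijenhuis bracket is the $\mathbb R$-bilinear bracket given on $K=\alpha\otimes X$ ($\alpha$ a $k$-form, $X$ a vector field) and $L=\beta\otimes Y$ ($\beta$ an $l$-form) by $[K,L]_{\mathrm{FN}}=\alpha\wedge\beta\otimes[X,Y]+\alpha\wedge\mathcal L_X\beta\otimes Y-\mathcal L_Y\alpha\wedge\beta\otimes X+(-1)^kd\alpha\wedge i_X\beta\otimes Y+(-1)^ki_Y\alpha\wedge d\beta\otimes X$, where $d$ is the de Rham differential, $i_X$ contraction and $\mathcal L_X=i_Xd+di_X$ the Lie derivative. For a Nijenhuis operator $P$ (i.e. $[P,P]_{\mathrm{FN}}=0$), $d_{\mathrm{FN}}=[P,-]_{\mathrm{FN}}$ is a differential of degree $1$ and $\mathrm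 H^\bullet_{\mathrm{FN}}(T_{\mathbb R^n})$ denotes its cohomology. *)

theory Defs
  imports "HOL-Analysis.Analysis" "HOL-Combinatorics.Permutations"
begin

text \<open>A scalar k-form is represented by its values on constant vector fields:
  w x v = w_x(v 0, ..., v (k-1)); a vector-valued k-form K gives
  K x v in real^'n (components w.r.t. the coordinate fields).\<close>

type_synonym 'n sform = "real^'n \<Rightarrow> (nat \<Rightarrow> real^'n) \<Rightarrow> real"
type_synonym 'n vform = "real^'n \<Rightarrow> (nat \<Rightarrow> real^'n) \<Rightarrow> real^'n"

coinductive smooth_fun :: "(real^('n::finite) \<Rightarrow> real) \<Rightarrow> bool" where
  "(\<forall>x. f differentiable (at x)) \<Longrightarrow>
   (\<forall>j. smooth_fun (\<lambda>x. frechet_derivative f (at x) (axis j 1))) \<Longrightarrow> smooth_fun f"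

definition vvform :: "nat \<Rightarrow> ('n::finite) vform set" where
  "vvform k = {K.
     (\<forall>x v w. (\<forall>i<k. v i = w i) \<longrightarrow> K x v = K x w) \<and>
     (\<forall>x v i. i < k \<longrightarrow> linear (\<lambda>u. K x (v(i := u)))) \<and>
     (\<forall>x v i j. i < k \<and> j < k \<and> i \<noteq> j \<and> v i = v j \<longrightarrow> K x v = 0) \<and>
     (\<forall>v j. smooth_fun (\<lambda>x. K x v $ j))}"

definition comp :: "('n::finite) vform \<Rightarrow> 'n \<Rightarrow> 'n sform" where
  "comp K j = (\<lambda>x v. K x v $ j)"

definition wedge :: "nat \<Rightarrow> nat \<Rightarrow> ('n::finite) sform \<Rightarrow> 'n sform \<Rightarrow> 'n sform" where
  "wedge k l a b = (\<lambda>x v. (1 / (fact k * fact l)) *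
     (\<Sum>\<sigma>\<in>{\<sigma>. \<sigma> permutes {..<k+l}}.
        of_int (sign \<sigma>) * a x (\<lambda>i. v (\<sigma> i)) * b x (\<lambda>i. v (\<sigma> (i + k)))))"

definition dR :: "nat \<Rightarrow> ('n::finite) sform \<Rightarrow> 'n sform" where
  "dR k w = (\<lambda>x v. \<Sum>i\<le>k. (-1)^i *
     frechet_derivative (\<lambda>y. w y (\<lambda>m. if m < i then v m else v (Suc m))) (at x) (v i))"

definition contr :: "nat \<Rightarrow> ('n::finite) \<Rightarrow> 'n sform \<Rightarrow> 'n sform" where
  "contr k j w = (if k = 0 then (\<lambda>x v. 0)
     else (\<lambda>x v. w x (\<lambda>m. if m = 0 then axis j 1 else v (m - 1))))"

definition lie :: "('n::finite) \<Rightarrow> 'n sform \<Rightarrow> 'n sform" where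
  "lie j w = (\<lambda>x v. frechet_derivative (\<lambda>y. w y v) (at x) (axis j 1))"

text \<open>Froelicher-Nijenhuis bracket of a k-form K and an l-form L, obtained by
  R-bilinear extension of the defining formula, writing
  K = sum_j K^j (x) d/dx^j, L = sum_m L^m (x) d/dx^m
  (the term with [d/dx^j, d/dx^m] vanishes).\<close>
definition FN :: "nat \<Rightarrow> nat \<Rightarrow> ('n::finite) vform \<Rightarrow> 'n vform \<Rightarrow> 'n vform" where
  "FN k l K L = (\<lambda>x v. \<Sum>j\<in>UNIV. \<Sum>m\<in>UNIV.
      wedge k l (comp K j) (lie j (comp L m)) x v *\<^sub>R axis m 1
    - wedge k l (lie m (comp K j)) (comp L m) x v *\<^sub>R axis j 1
    + ((-1)^k * wedge (k+1) (l-1) (dR k (comp K j)) (contr l j (comp L m)) x v) *\<^sub>R axis m 1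
    + ((-1)^k * wedge (k-1) (l+1) (contr k m (comp K j)) (dR l (comp L m)) x v) *\<^sub>R axis j 1)"

definition Pdiag :: "('n::finite) vform" where
  "Pdiag = (\<lambda>x v. \<chi> i. x $ i * v 0 $ i)"

end

theory Submission
  imports Defs
begin

(* In coordinates, the t-th component of [P, K]_FN evaluated on (v_0, ..., v_k) is
     Sum_i (-1)^i (Sum_j (x^j - x^t) v_i^j d_j K^t(.. v_i omitted ..) - v_i^t K^t(.. v_i omitted ..)).
   Taking v_0 = d/dx^t kills the derivative terms of the summand i = 0, which reduces to
   -K^t(v_1, ..., v_k).  So if K is closed of degree k+1, then L = -Sum_t (i_{d/dx^t} K^t) (x) d/dx^t
   satisfies [P, L]_FN = K, and a closed K of degree 0 vanishes. *)

section \<open>Permutations of {..<Suc k}\<close>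

(* v \<circ> move_to_front i lists v i first, then v 0, ..., v (i - 1), v (i + 1), ... *)
definition move_to_front :: "nat \<Rightarrow> nat \<Rightarrow> nat" where
  "move_to_front i t = (if t = 0 then i else if t \<le> i then t - 1 else t)"

definition shift_perm :: "(nat \<Rightarrow> nat) \<Rightarrow> nat \<Rightarrow> nat" where
  "shift_perm r t = (if t = 0 then 0 else Suc (r (t - 1)))"

lemma move_to_front_0: "move_to_front 0 = id"
  by (auto simp: fun_eq_iff move_to_front_def)

lemma move_to_front_Suc: "move_to_front (Suc i) = Transposition.transpose i (Suc i) \<circ> move_to_front i"
  by (auto simp: fun_eq_iff move_to_front_def Transposition.transpose_def)

lemma permutes_move_to_front: "i \<le> k \<Longrightarrow> move_to_front i permutes {..<Suc k}"
proof (induction i)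
  case 0
  show ?case unfolding move_to_front_0 by (rule permutes_id)
next
  case (Suc i)
  then show ?case
    unfolding move_to_front_Suc by (intro permutes_compose permutes_swap_id) auto
qed

lemma permutation_move_to_front: "permutation (move_to_front i)"
  using permutes_imp_permutation[OF finite_lessThan permutes_move_to_front[of i i]] by simp

lemma sign_move_to_front: "sign (move_to_front i) = (-1) ^ i"
proof (induction i)
  case 0
  show ?case by (simp add: move_to_front_0)
next
  case (Suc i)
  have "sign (move_to_front (Suc i)) = sign (Transposition.transpose i (Suc i)) * sign (move_to_front i)"
    unfolding move_to_front_Suc
    by (rule sign_compose) (simp_all add: permutation_move_to_front permutation_swap_id)
  with Suc show ?case by (simp add: sign_swap_id)
qed

lemma shift_perm_id: "shift_perm id = id"
  by (auto simp: fun_eq_iff shift_perm_def)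

lemma shift_perm_transpose:
  "shift_perm (Transposition.transpose a b \<circ> r)
     = Transposition.transpose (Suc a) (Suc b) \<circ> shift_perm r"
  by (auto simp: fun_eq_iff shift_perm_def Transposition.transpose_def)

lemma permutes_shift_perm:
  assumes "r permutes {..<k}"
  shows "shift_perm r permutes {..<Suc k}"
  using assms finite_lessThan[of k]
proof (induction rule: permutes_induct)
  case id
  show ?case unfolding shift_perm_id by (rule permutes_id)
next
  case (swap a b p)
  then show ?case
    unfolding shift_perm_transpose by (intro permutes_compose permutes_swap_id) auto
qed

lemma sign_shift_perm:
  assumes "r permutes {..<k}"
  shows "sign (shift_perm r) = sign r"
  using assms finite_lessThan[of k]
proof (induction rule: permutes_induct)
  case id
  show ?case unfolding shift_perm_id ..
next
  case (swap a b p)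
  have p: "permutation p" "permutation (shift_perm p)"
    using permutes_imp_permutation[OF finite_lessThan] permutes_shift_perm swap.hyps(4)
    by blast+
  have "sign (shift_perm (Transposition.transpose a b \<circ> p))
      = sign (Transposition.transpose (Suc a) (Suc b)) * sign (shift_perm p)"
    unfolding shift_perm_transpose by (rule sign_compose) (simp_all add: p permutation_swap_id)
  also have "\<dots> = sign (Transposition.transpose a b) * sign p"
    using swap.IH by (simp add: sign_swap_id)
  also have "\<dots> = sign (Transposition.transpose a b \<circ> p)"
    by (rule sign_compose[symmetric]) (simp_all add: p permutation_swap_id)
  finally show ?case .
qed

lemma permutes_fixing_0_eq_shift_perm:
  assumes t: "t permutes {..<Suc k}" and t0: "t 0 = 0"
  obtains r where "r permutes {..<k}" "t = shift_perm r"
proof -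
  define r where "r s = t (Suc s) - 1" for s
  have t_Suc: "t (Suc s) = Suc (r s)" for s
  proof -
    have "t (Suc s) \<noteq> t 0"
      using injD[OF permutes_inj[OF t]] by blast
    with t0 show ?thesis by (simp add: r_def)
  qed
  have "t = shift_perm r"
  proof
    fix x
    show "t x = shift_perm r x"
      by (cases x) (simp_all add: shift_perm_def t0 t_Suc)
  qed
  moreover have "r permutes {..<k}"
    unfolding permutes_def
  proof (intro conjI allI impI)
    fix s assume "s \<notin> {..<k}"
    then show "r s = s"
      using permutes_not_in[OF t, of "Suc s"] by (simp add: t_Suc)
  next
    fix y
    obtain x where x: "t x = Suc y"
      using surjD[OF permutes_surj[OF t], of "Suc y"] by auto
    with t0 obtain s where s: "t (Suc s) = Suc y"
      by (cases x) auto
    show "\<exists>!s. r s = y"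
    proof (rule ex1I)
      show "r s = y" using s by (simp add: t_Suc)
    next
      fix s' assume "r s' = y"
      then have "t (Suc s') = t (Suc s)" using s by (simp add: t_Suc)
      from injD[OF permutes_inj[OF t] this] show "s' = s" by simp
    qed
  qed
  ultimately show thesis using that by blast
qed

lemma sum_permutations_Suc:
  "sum g {s. s permutes {..<Suc k}}
     = (\<Sum>i\<le>k. \<Sum>r | r permutes {..<k}. g (move_to_front i \<circ> shift_perm r))"
proof -
  let ?f = "\<lambda>(i, r). move_to_front i \<circ> shift_perm r"
  let ?R = "{r. r permutes {..<k}}"
  have "inj ?f"
  proof (rule injI, clarify)
    fix i r j s
    assume eq: "move_to_front i \<circ> shift_perm r = move_to_front j \<circ> shift_perm s"
    from fun_cong[OF eq, of 0] have "i = j"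
      by (simp add: shift_perm_def move_to_front_def)
    have "shift_perm r = shift_perm s"
    proof
      fix x
      from fun_cong[OF eq, of x] \<open>i = j\<close>
      have "move_to_front j (shift_perm r x) = move_to_front j (shift_perm s x)" by simp
      then show "shift_perm r x = shift_perm s x"
        by (rule injD[OF bij_is_inj[OF permutation_bijective[OF permutation_move_to_front]]])
    qed
    have "r = s"
    proof
      fix x
      from fun_cong[OF \<open>shift_perm r = shift_perm s\<close>, of "Suc x"]
      show "r x = s x" by (simp add: shift_perm_def)
    qed
    with \<open>i = j\<close> show "i = j \<and> r = s" by simp
  qed
  have image: "?f ` ({..k} \<times> ?R) = {s. s permutes {..<Suc k}}"
  proof (intro equalityI subsetI)
    fix s assume "s \<in> ?f ` ({..k} \<times> ?R)"
    then show "s \<in> {s. s permutes {..<Suc k}}"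
      using permutes_move_to_front permutes_shift_perm permutes_compose by fastforce
  next
    fix s assume "s \<in> {s. s permutes {..<Suc k}}"
    then have s: "s permutes {..<Suc k}" by simp
    define i where "i = s 0"
    have ik: "i \<le> k"
      using permutes_in_image[OF s, of 0] by (simp add: i_def)
    have m: "move_to_front i permutes {..<Suc k}"
      by (rule permutes_move_to_front[OF ik])
    define t where "t = inv (move_to_front i) \<circ> s"
    have "t permutes {..<Suc k}"
      unfolding t_def by (intro permutes_compose s permutes_inv m)
    moreover have "t 0 = 0"
      using permutes_inv_eq[OF m] by (simp add: t_def i_def move_to_front_def)
    ultimately obtain r where r: "r permutes {..<k}" "t = shift_perm r"
      by (rule permutes_fixing_0_eq_shift_perm)
    have "s = move_to_front i \<circ> t"
      by (rule ext) (simp add: t_def permutes_inverses(1)[OF m])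
    with r ik show "s \<in> ?f ` ({..k} \<times> ?R)" by auto
  qed
  have "sum g (?f ` ({..k} \<times> ?R)) = sum (g \<circ> ?f) ({..k} \<times> ?R)"
    by (rule sum.reindex[OF inj_on_subset[OF \<open>inj ?f\<close> subset_UNIV]])
  then show ?thesis
    unfolding image by (simp add: sum.cartesian_product case_prod_unfold)
qed

section \<open>Alternating forms and the wedge product\<close>

definition drop_arg :: "nat \<Rightarrow> (nat \<Rightarrow> 'a) \<Rightarrow> nat \<Rightarrow> 'a" where
  "drop_arg i v = (\<lambda>m. if m < i then v m else v (Suc m))"

definition prepend_arg :: "'a \<Rightarrow> (nat \<Rightarrow> 'a) \<Rightarrow> nat \<Rightarrow> 'a" where
  "prepend_arg u v = (\<lambda>m. if m = 0 then u else v (m - 1))"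

lemma prepend_arg_simps [simp]:
  "prepend_arg u v 0 = u"
  "prepend_arg u v (Suc i) = v i"
  "drop_arg 0 (prepend_arg u v) = v"
  "drop_arg (Suc i) (prepend_arg u v) = prepend_arg u (drop_arg i v)"
  by (auto simp: prepend_arg_def drop_arg_def fun_eq_iff)

definition alternating :: "nat \<Rightarrow> ('n::finite) sform \<Rightarrow> bool" where
  "alternating k a \<longleftrightarrow>
     (\<forall>x v r. r permutes {..<k} \<longrightarrow> a x (\<lambda>i. v (r i)) = of_int (sign r) * a x v)"

lemma of_int_sign_square: "(of_int (sign r) :: real) * of_int (sign r) = 1"
  by (metis of_int_1 of_int_mult sign_idempotent)

lemma card_permutations_lessThan: "card {r. r permutes {..<k}} = fact k"
  by (rule card_permutations) auto

lemma wedge_1_left_expansion: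
  assumes a: "alternating k a" and t: "\<And>x v w. v 0 = w 0 \<Longrightarrow> t x v = t x w"
  shows "wedge 1 k t a x v = (\<Sum>i\<le>k. (-1) ^ i * t x (\<lambda>_. v i) * a x (drop_arg i v))"
proof -
  let ?g = "\<lambda>\<sigma>. of_int (sign \<sigma>) * t x (\<lambda>i. v (\<sigma> i)) * a x (\<lambda>i. v (\<sigma> (i + 1)))"
  have summand: "?g (move_to_front i \<circ> shift_perm r) = (-1) ^ i * t x (\<lambda>_. v i) * a x (drop_arg i v)"
    if r: "r permutes {..<k}" for i r
  proof -
    have "sign (move_to_front i \<circ> shift_perm r) = sign (move_to_front i) * sign (shift_perm r)"
      by (rule sign_compose) (simp_all add: permutation_move_to_front
          permutes_imp_permutation[OF finite_lessThan permutes_shift_perm[OF r]])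
    then have sign: "(of_int (sign (move_to_front i \<circ> shift_perm r)) :: real) = (-1) ^ i * of_int (sign r)"
      by (simp add: sign_move_to_front sign_shift_perm[OF r])
    have first: "t x (\<lambda>s. v ((move_to_front i \<circ> shift_perm r) s)) = t x (\<lambda>_. v i)"
      by (rule t) (simp add: shift_perm_def move_to_front_def)
    have rest: "(\<lambda>s. v ((move_to_front i \<circ> shift_perm r) (s + 1))) = (\<lambda>s. drop_arg i v (r s))"
      by (auto simp: fun_eq_iff shift_perm_def move_to_front_def drop_arg_def)
    have alt: "a x (\<lambda>s. drop_arg i v (r s)) = of_int (sign r) * a x (drop_arg i v)"
      using a r by (simp add: alternating_def)
    have "?g (move_to_front i \<circ> shift_perm r)
        = ((-1) ^ i * of_int (sign r)) * t x (\<lambda>_. v i) * (of_int (sign r) * a x (drop_arg i v))"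
      by (simp only: sign first rest alt)
    also have "\<dots>
        = (-1) ^ i * t x (\<lambda>_. v i) * a x (drop_arg i v) * (of_int (sign r) * of_int (sign r))"
      by (simp only: ac_simps)
    finally show ?thesis by (simp add: of_int_sign_square)
  qed
  have "wedge 1 k t a x v = 1 / fact k * sum ?g {\<sigma>. \<sigma> permutes {..<Suc k}}"
    by (simp add: wedge_def)
  also have "\<dots>
      = 1 / fact k * (\<Sum>i\<le>k. \<Sum>r | r permutes {..<k}. ?g (move_to_front i \<circ> shift_perm r))"
    by (simp only: sum_permutations_Suc)
  also have "\<dots> = 1 / fact k *
      (\<Sum>i\<le>k. \<Sum>r | r permutes {..<k}. (-1) ^ i * t x (\<lambda>_. v i) * a x (drop_arg i v))"
    by (intro arg_cong[where f="\<lambda>s. 1 / fact k * s"] sum.cong refl) (simp only: mem_Collect_eq summand)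
  also have "\<dots> = (\<Sum>i\<le>k. (-1) ^ i * t x (\<lambda>_. v i) * a x (drop_arg i v))"
    by (simp add: card_permutations_lessThan sum_distrib_left)
  finally show ?thesis .
qed

lemma wedge_0_left:
  assumes b: "alternating l b" and a: "\<And>x v w. a x v = a x w"
  shows "wedge 0 l a b x v = a x v * b x v"
proof -
  have "of_int (sign \<sigma>) * a x (\<lambda>i. v (\<sigma> i)) * b x (\<lambda>i. v (\<sigma> i)) = a x v * b x v"
    if "\<sigma> permutes {..<l}" for \<sigma>
  proof -
    have "b x (\<lambda>i. v (\<sigma> i)) = of_int (sign \<sigma>) * b x v"
      using b that by (simp add: alternating_def)
    with a[of x "\<lambda>i. v (\<sigma> i)" v]
    have "of_int (sign \<sigma>) * a x (\<lambda>i. v (\<sigma> i)) * b x (\<lambda>i. v (\<sigma> i))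
        = a x v * b x v * (of_int (sign \<sigma>) * of_int (sign \<sigma>))"
      by (simp only: ac_simps)
    then show ?thesis by (simp add: of_int_sign_square)
  qed
  then have "wedge 0 l a b x v = 1 / fact l * (\<Sum>\<sigma> | \<sigma> permutes {..<l}. a x v * b x v)"
    by (simp add: wedge_def)
  then show ?thesis
    by (simp add: card_permutations_lessThan)
qed

lemma alternating_wedge: "alternating (k + l) (wedge k l a b)"
  unfolding alternating_def
proof (intro allI impI)
  fix x v r assume r: "r permutes {..<k + l}"
  let ?g = "\<lambda>w \<sigma>. of_int (sign \<sigma>) * a x (\<lambda>i. w (\<sigma> i)) * b x (\<lambda>i. w (\<sigma> (i + k)))"
  let ?S = "{\<sigma>. \<sigma> permutes {..<k + l}}"
  have "?g (\<lambda>i. v (r i)) \<sigma> = of_int (sign r) * ?g v (r \<circ> \<sigma>)" if "\<sigma> \<in> ?S" for \<sigma>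
  proof -
    have "sign (r \<circ> \<sigma>) = sign r * sign \<sigma>"
      using r that by (simp add: sign_compose permutes_imp_permutation[OF finite_lessThan])
    then have "(of_int (sign r) :: real) * of_int (sign (r \<circ> \<sigma>))
        = of_int (sign \<sigma>) * (of_int (sign r) * of_int (sign r))"
      by (simp add: ac_simps)
    then have "(of_int (sign r) :: real) * of_int (sign (r \<circ> \<sigma>)) = of_int (sign \<sigma>)"
      by (simp add: of_int_sign_square)
    then show ?thesis by (simp add: ac_simps)
  qed
  then have "sum (?g (\<lambda>i. v (r i))) ?S = sum (\<lambda>\<sigma>. of_int (sign r) * ?g v (r \<circ> \<sigma>)) ?S"
    by (rule sum.cong[OF refl])
  also have "\<dots> = sum (\<lambda>\<sigma>. of_int (sign r) * ?g v \<sigma>) ?S"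
    using setum_permutations_compose_left[OF r, of "\<lambda>\<sigma>. of_int (sign r) * ?g v \<sigma>"] by simp
  finally have "sum (?g (\<lambda>i. v (r i))) ?S = of_int (sign r) * sum (?g v) ?S"
    by (simp add: sum_distrib_left)
  then show "wedge k l a b x (\<lambda>i. v (r i)) = of_int (sign r) * wedge k l a b x v"
    unfolding wedge_def by (simp only:) (rule mult.left_commute)
qed

lemma wedge_zero_left: "wedge k l (\<lambda>x v. 0) b = (\<lambda>x v. 0)"
  by (simp add: wedge_def fun_eq_iff)

lemma alternating_sum:
  "finite S \<Longrightarrow> (\<And>j. j \<in> S \<Longrightarrow> alternating k (f j))
    \<Longrightarrow> alternating k (\<lambda>x v. \<Sum>j\<in>S. f j x v)"
  by (simp add: alternating_def sum_distrib_left)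

section \<open>Smooth functions, Lie derivative and de Rham differential\<close>

lemma frechet_derivative_cmult:
  fixes f :: "'a::real_normed_vector \<Rightarrow> real"
  assumes "f differentiable (at x)"
  shows "frechet_derivative (\<lambda>y. c * f y) (at x) = (\<lambda>h. c * frechet_derivative f (at x) h)"
  using has_derivative_mult_right[OF frechet_derivative_works[THEN iffD1, OF assms], of c]
  by (rule frechet_derivative_at[symmetric])

lemma frechet_derivative_minus:
  assumes "f differentiable (at x)"
  shows "frechet_derivative (\<lambda>y. - f y) (at x) = (\<lambda>h. - frechet_derivative f (at x) h)"
  using has_derivative_minus[OF frechet_derivative_works[THEN iffD1, OF assms]]
  by (rule frechet_derivative_at[symmetric])

lemma frechet_derivative_component_mult:
  "frechet_derivative (\<lambda>y. y $ j * c) (at x) = (\<lambda>h. h $ j * (c::real))"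
  by (rule frechet_derivative_at[symmetric])
    (intro derivative_intros bounded_linear_imp_has_derivative bounded_linear_vec_nth)

lemma smooth_fun_differentiable: "smooth_fun f \<Longrightarrow> f differentiable (at x)"
  by (erule smooth_fun.cases) auto

lemma smooth_fun_affine_component: "smooth_fun (\<lambda>x::real^'n::finite. x $ j * c + d)"
proof (coinduction arbitrary: j c d rule: smooth_fun.coinduct)
  case smooth_fun
  have deriv: "((\<lambda>x::real^'n. x $ j * c + d) has_derivative (\<lambda>h. h $ j * c)) (at x)" for x
    by (rule has_derivative_add_const[OF has_derivative_mult_left[OF
          bounded_linear_imp_has_derivative[OF bounded_linear_vec_nth]]])
  then have "(\<lambda>x. frechet_derivative (\<lambda>x::real^'n. x $ j * c + d) (at x) (axis i 1))
      = (\<lambda>x. x $ j * 0 + axis i 1 $ j * c)" for i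
    by (simp add: frechet_derivative_at[OF deriv, symmetric])
  moreover have "\<forall>x. (\<lambda>x::real^'n. x $ j * c + d) differentiable (at x)"
    using deriv by (blast intro: differentiableI)
  ultimately show ?case by blast
qed

lemma smooth_fun_minus: "smooth_fun f \<Longrightarrow> smooth_fun (\<lambda>x. - f x)"
proof (coinduction arbitrary: f rule: smooth_fun.coinduct)
  case smooth_fun
  then have diff: "\<forall>x. f differentiable (at x)"
    and smooth: "\<forall>j. smooth_fun (\<lambda>x. frechet_derivative f (at x) (axis j 1))"
    by (auto elim: smooth_fun.cases)
  have "\<forall>x. (\<lambda>x. - f x) differentiable (at x)"
    using diff by (blast intro: differentiable_minus)
  moreover have "(\<lambda>x. frechet_derivative (\<lambda>x. - f x) (at x) (axis j 1))
      = (\<lambda>x. - frechet_derivative f (at x) (axis j 1))" for j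
    using diff by (simp add: frechet_derivative_minus)
  ultimately show ?case
    using smooth by (intro exI[of _ "\<lambda>x. - f x"]) auto
qed

definition diff_alternating :: "nat \<Rightarrow> ('n::finite) sform \<Rightarrow> bool" where
  "diff_alternating k a \<longleftrightarrow> alternating k a \<and> (\<forall>v x. (\<lambda>y. a y v) differentiable (at x))"

lemma alternating_lie:
  assumes "diff_alternating k a"
  shows "alternating k (lie j a)"
  unfolding alternating_def
proof (intro allI impI)
  fix x v r assume "r permutes {..<k}"
  then have "(\<lambda>y. a y (\<lambda>i. v (r i))) = (\<lambda>y. of_int (sign r) * a y v)"
    using assms by (simp add: diff_alternating_def alternating_def)
  then show "lie j a x (\<lambda>i. v (r i)) = of_int (sign r) * lie j a x v"
    using assms by (simp add: lie_def frechet_derivative_cmult diff_alternating_def)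
qed

lemma frechet_derivative_coordinate_expansion:
  fixes f :: "real^'n::finite \<Rightarrow> real"
  assumes "f differentiable (at x)"
  shows "frechet_derivative f (at x) h = (\<Sum>j\<in>UNIV. h $ j * frechet_derivative f (at x) (axis j 1))"
proof -
  have lin: "linear (frechet_derivative f (at x))"
    by (rule linear_frechet_derivative[OF assms])
  have "h = (\<Sum>j\<in>UNIV. h $ j *\<^sub>R axis j 1)"
    using basis_expansion[of h] by (simp add: scalar_mult_eq_scaleR)
  then have "frechet_derivative f (at x) h
      = frechet_derivative f (at x) (\<Sum>j\<in>UNIV. h $ j *\<^sub>R axis j 1)" by simp
  also have "\<dots> = (\<Sum>j\<in>UNIV. h $ j * frechet_derivative f (at x) (axis j 1))"
    by (simp add: linear_sum[OF lin] linear_scale[OF lin])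
  finally show ?thesis .
qed

lemma dR_expansion:
  assumes "diff_alternating k a"
  shows "dR k a x v = (\<Sum>i\<le>k. (-1) ^ i * (\<Sum>j\<in>UNIV. v i $ j * lie j a x (drop_arg i v)))"
  using assms
  by (simp add: dR_def lie_def diff_alternating_def frechet_derivative_coordinate_expansion
      flip: drop_arg_def)

lemma dR_eq_sum_wedge:
  assumes "diff_alternating k a"
  shows "dR k a = (\<lambda>x v. \<Sum>j\<in>UNIV. wedge 1 k (\<lambda>x v. v 0 $ j) (lie j a) x v)"
proof (intro ext)
  fix x v
  have "wedge 1 k (\<lambda>x v. v 0 $ j) (lie j a) x v
      = (\<Sum>i\<le>k. (-1) ^ i * v i $ j * lie j a x (drop_arg i v))" for j
    by (rule wedge_1_left_expansion[OF alternating_lie[OF assms]]) simp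
  then have "(\<Sum>j\<in>UNIV. wedge 1 k (\<lambda>x v. v 0 $ j) (lie j a) x v)
      = (\<Sum>i\<le>k. (-1) ^ i * (\<Sum>j\<in>UNIV. v i $ j * lie j a x (drop_arg i v)))"
    by (simp add: sum.swap[where A = UNIV] sum_distrib_left mult.assoc)
  then show "dR k a x v = (\<Sum>j\<in>UNIV. wedge 1 k (\<lambda>x v. v 0 $ j) (lie j a) x v)"
    using dR_expansion[OF assms] by simp
qed

lemma alternating_dR: "diff_alternating k a \<Longrightarrow> alternating (Suc k) (dR k a)"
  unfolding dR_eq_sum_wedge
  by (rule alternating_sum) (use alternating_wedge[of 1 k] in auto)

section \<open>The Froelicher-Nijenhuis bracket with P\<close>

lemma vvformD:
  assumes "K \<in> vvform k"
  shows "\<And>x v w. (\<forall>i<k. v i = w i) \<Longrightarrow> K x v = K x w"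
    and "\<And>x v i. i < k \<Longrightarrow> linear (\<lambda>u. K x (v(i := u)))"
    and "\<And>x v i j. i < k \<Longrightarrow> j < k \<Longrightarrow> i \<noteq> j \<Longrightarrow> v i = v j \<Longrightarrow> K x v = 0"
    and "\<And>v j. smooth_fun (\<lambda>x. K x v $ j)"
  using assms unfolding vvform_def by blast+

lemma vvform_transpose_args:
  assumes K: "K \<in> vvform k" and ab: "a < k" "b < k" "a \<noteq> b"
  shows "K x (\<lambda>i. v (Transposition.transpose a b i)) = - K x v"
proof -
  define f where "f p q = K x (v(a := p, b := q))" for p q
  have lin_a: "linear (\<lambda>p. f p q)" for q
    using vvformD(2)[OF K ab(1), of x "v(b := q)"] ab(3) by (simp add: f_def fun_upd_twist)
  have lin_b: "linear (\<lambda>q. f p q)" for p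
    using vvformD(2)[OF K ab(2), of x "v(a := p)"] by (simp add: f_def)
  have diag: "f p p = 0" for p
    unfolding f_def by (rule vvformD(3)[OF K ab]) simp
  have "0 = f (v a + v b) (v a + v b)"
    by (rule diag[symmetric])
  also have "\<dots> = f (v a) (v b) + f (v b) (v a)"
    using diag[of "v a"] diag[of "v b"] by (simp add: linear_add[OF lin_a] linear_add[OF lin_b])
  finally have "f (v b) (v a) = - f (v a) (v b)"
    by (metis add.commute eq_neg_iff_add_eq_0)
  moreover have "f (v a) (v b) = K x v"
    by (simp add: f_def)
  moreover have "f (v b) (v a) = K x (\<lambda>i. v (Transposition.transpose a b i))"
    unfolding f_def by (rule arg_cong[where f = "K x"]) (auto simp: Transposition.transpose_def)
  ultimately show ?thesis by simp
qed

lemma vvform_permute_args: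
  assumes K: "K \<in> vvform k" and r: "r permutes {..<k}"
  shows "K x (\<lambda>i. v (r i)) = of_int (sign r) *\<^sub>R K x v"
  using r finite_lessThan[of k]
proof (induction arbitrary: v rule: permutes_induct)
  case id
  then show ?case by simp
next
  case (swap a b p)
  have sign: "sign (Transposition.transpose a b \<circ> p) = - sign p"
    using sign_compose[OF permutation_swap_id permutes_imp_permutation[OF finite_lessThan swap.hyps(4)]]
      swap.hyps(3) by (simp add: sign_swap_id)
  have "K x (\<lambda>i. v ((Transposition.transpose a b \<circ> p) i)) = of_int (sign p) *\<^sub>R (- K x v)"
    using swap.IH[of "\<lambda>j. v (Transposition.transpose a b j)"] vvform_transpose_args[OF K] swap.hyps
    by simp
  then show ?case
    unfolding sign by simp
qed

lemma diff_alternating_comp: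
  assumes "K \<in> vvform k"
  shows "diff_alternating k (comp K j)"
  unfolding diff_alternating_def alternating_def comp_def
  using vvform_permute_args[OF assms] smooth_fun_differentiable[OF vvformD(4)[OF assms]] by simp

lemma comp_Pdiag: "comp Pdiag j = (\<lambda>x v. x $ j * v 0 $ j)"
  by (simp add: comp_def Pdiag_def)

lemma lie_comp_Pdiag: "lie m (comp Pdiag j) = (\<lambda>x v. axis m 1 $ j * v 0 $ j)"
  by (simp add: lie_def comp_Pdiag frechet_derivative_component_mult)

lemma dR_comp_Pdiag: "dR 1 (comp Pdiag j) = (\<lambda>x v. 0)"
  by (simp add: dR_def comp_Pdiag frechet_derivative_component_mult)

lemma FN_Pdiag_component_wedge:
  assumes K: "K \<in> vvform k"
  shows "FN 1 k Pdiag K x v $ t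
    = (\<Sum>j\<in>UNIV. wedge 1 k (comp Pdiag j) (lie j (comp K t)) x v)
      - wedge 1 k (\<lambda>x v. v 0 $ t) (comp K t) x v - x $ t * dR k (comp K t) x v"
proof -
  have lie_term: "wedge 1 k (lie m (comp Pdiag j)) (comp K m) x v *\<^sub>R axis j 1
      = (if m = j then wedge 1 k (\<lambda>x v. v 0 $ j) (comp K j) x v *\<^sub>R axis j 1 else 0)" for j m
    by (auto simp: lie_comp_Pdiag axis_def wedge_zero_left)
  have contr_term: "((-1) ^ 1 * wedge (1 - 1) (k + 1) (contr 1 m (comp Pdiag j)) (dR k (comp K m)) x v)
        *\<^sub>R axis j 1
      = (if m = j then - (x $ j * dR k (comp K j) x v) *\<^sub>R axis j 1 else 0)" for j m
    using wedge_0_left[OF alternating_dR[OF diff_alternating_comp[OF K]]]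
    by (simp add: contr_def comp_Pdiag axis_def)
  have "FN 1 k Pdiag K x v
    = (\<Sum>j\<in>UNIV. \<Sum>m\<in>UNIV. wedge 1 k (comp Pdiag j) (lie j (comp K m)) x v *\<^sub>R axis m 1)
      - (\<Sum>j\<in>UNIV. (wedge 1 k (\<lambda>x v. v 0 $ j) (comp K j) x v + x $ j * dR k (comp K j) x v)
          *\<^sub>R axis j 1)"
    unfolding FN_def lie_term contr_term dR_comp_Pdiag wedge_zero_left
    by (simp add: sum_subtractf sum.distrib sum.delta' scaleR_add_left)
  then show ?thesis
    by (simp add: axis_def if_distrib[of "\<lambda>c. _ * c"] cong: if_cong)
qed

lemma sum_coordinate_difference_axis: "(\<Sum>j\<in>UNIV. (x $ j - x $ t) * axis t 1 $ j * f j) = (0::real)"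
  by (rule sum.neutral) (auto simp: axis_def)

lemma FN_Pdiag_component:
  assumes K: "K \<in> vvform k"
  shows "FN 1 k Pdiag K x v $ t = (\<Sum>i\<le>k. (-1) ^ i *
      ((\<Sum>j\<in>UNIV. (x $ j - x $ t) * v i $ j * lie j (comp K t) x (drop_arg i v))
       - v i $ t * comp K t x (drop_arg i v)))"
proof -
  have a: "diff_alternating k (comp K t)"
    by (rule diff_alternating_comp[OF K])
  let ?L = "\<lambda>j i. lie j (comp K t) x (drop_arg i v)"
  have "wedge 1 k (comp Pdiag j) (lie j (comp K t)) x v
      = (\<Sum>i\<le>k. (-1) ^ i * (x $ j * v i $ j * ?L j i))"
    for j using wedge_1_left_expansion[OF alternating_lie[OF a], of "comp Pdiag j"]
    by (simp add: comp_Pdiag ac_simps)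
  then have lie_part: "(\<Sum>j\<in>UNIV. wedge 1 k (comp Pdiag j) (lie j (comp K t)) x v)
      = (\<Sum>i\<le>k. (-1) ^ i * (\<Sum>j\<in>UNIV. x $ j * v i $ j * ?L j i))"
    by (simp add: sum.swap[where A = UNIV] sum_distrib_left)
  have shift_part: "wedge 1 k (\<lambda>x v. v 0 $ t) (comp K t) x v
      = (\<Sum>i\<le>k. (-1) ^ i * (v i $ t * comp K t x (drop_arg i v)))"
    using wedge_1_left_expansion[of k "comp K t" "\<lambda>x v. v 0 $ t"] a
    by (simp add: diff_alternating_def ac_simps)
  have dR_part: "x $ t * dR k (comp K t) x v
      = (\<Sum>i\<le>k. (-1) ^ i * (\<Sum>j\<in>UNIV. x $ t * v i $ j * ?L j i))"
    by (simp add: dR_expansion[OF a] sum_distrib_left ac_simps)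
  have "FN 1 k Pdiag K x v $ t
      = (\<Sum>i\<le>k. (-1) ^ i * (\<Sum>j\<in>UNIV. x $ j * v i $ j * ?L j i))
        - (\<Sum>i\<le>k. (-1) ^ i * (v i $ t * comp K t x (drop_arg i v)))
        - (\<Sum>i\<le>k. (-1) ^ i * (\<Sum>j\<in>UNIV. x $ t * v i $ j * ?L j i))"
    unfolding FN_Pdiag_component_wedge[OF K] lie_part shift_part dR_part ..
  then show ?thesis
    by (simp add: sum_subtractf sum.distrib sum_distrib_left algebra_simps)
qed

section \<open>Exactness\<close>

lemma Pdiag_vvform: "Pdiag \<in> vvform 1"
  unfolding vvform_def
proof (intro CollectI conjI allI impI)
  fix x v i assume "i < (1::nat)"
  then show "linear (\<lambda>u. Pdiag x (v(i := u)))"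
    by (intro linearI) (simp_all add: Pdiag_def vec_eq_iff algebra_simps)
next
  fix v :: "nat \<Rightarrow> real^'n" and j :: 'n
  show "smooth_fun (\<lambda>x. Pdiag x v $ j)"
    using smooth_fun_affine_component[of j "v 0 $ j" 0] by (simp add: Pdiag_def)
qed (auto simp: Pdiag_def)

lemma FN_Pdiag_Pdiag: "FN 1 1 Pdiag Pdiag = (\<lambda>x v. 0)"
proof (intro ext)
  fix x :: "real^'n" and v
  have off_diagonal: "(x $ j - x $ t) * a * (axis j 1 $ t * b) = 0" for j t and a b :: real
    by (auto simp: axis_def)
  show "FN 1 1 Pdiag Pdiag x v = 0"
    unfolding vec_eq_iff FN_Pdiag_component[OF Pdiag_vvform] lie_comp_Pdiag
    by (simp add: comp_Pdiag drop_arg_def off_diagonal)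
qed

(* L = - Sum_t (i_{d/dx^t} K^t) (x) d/dx^t, the primitive of a closed K *)
definition diag_contraction :: "('n::finite) vform \<Rightarrow> 'n vform" where
  "diag_contraction K = (\<lambda>x v. \<chi> t. - K x (prepend_arg (axis t 1) v) $ t)"

lemma diag_contraction_vvform:
  fixes K :: "('n::finite) vform"
  assumes K: "K \<in> vvform (Suc k)"
  shows "diag_contraction K \<in> vvform k"
  unfolding vvform_def diag_contraction_def
proof (intro CollectI conjI allI impI)
  fix x v w assume "\<forall>i<k. v i = (w i :: real^'n)"
  then have "K x (prepend_arg (axis t 1) v) = K x (prepend_arg (axis t 1) w)" for t
    by (intro vvformD(1)[OF K]) (auto simp: prepend_arg_def)
  then show "(\<chi> t. - K x (prepend_arg (axis t 1) v) $ t) = (\<chi> t. - K x (prepend_arg (axis t 1) w) $ t)"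
    by simp
next
  fix x v i assume "i < k"
  then have lin: "linear (\<lambda>u. K x ((prepend_arg (axis t 1) v)(Suc i := u)))" for t
    by (intro vvformD(2)[OF K]) simp
  have "prepend_arg (axis t 1) (v(i := u)) = (prepend_arg (axis t 1) v)(Suc i := u)" for t u
    by (auto simp: prepend_arg_def fun_eq_iff)
  then show "linear (\<lambda>u. \<chi> t. - K x (prepend_arg (axis t 1) (v(i := u))) $ t)"
    by (intro linearI) (simp_all add: vec_eq_iff linear_add[OF lin] linear_scale[OF lin])
next
  fix x v i j assume "i < k \<and> j < k \<and> i \<noteq> j \<and> v i = (v j :: real^'n)"
  then have "K x (prepend_arg (axis t 1) v) = 0" for t
    by (intro vvformD(3)[OF K, of "Suc i" "Suc j"]) auto
  then show "(\<chi> t. - K x (prepend_arg (axis t 1) v) $ t) = 0"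
    by (simp add: vec_eq_iff)
next
  fix v :: "nat \<Rightarrow> real^'n" and j
  show "smooth_fun (\<lambda>x. (\<chi> t. - K x (prepend_arg (axis t 1) v) $ t) $ j)"
    using smooth_fun_minus[OF vvformD(4)[OF K]] by simp
qed

lemma comp_diag_contraction:
  "comp (diag_contraction K) t = (\<lambda>x v. - comp K t x (prepend_arg (axis t 1) v))"
  by (simp add: diag_contraction_def comp_def)

lemma lie_comp_diag_contraction:
  assumes "K \<in> vvform k"
  shows "lie j (comp (diag_contraction K) t) x v = - lie j (comp K t) x (prepend_arg (axis t 1) v)"
  unfolding lie_def comp_diag_contraction
  using smooth_fun_differentiable[OF vvformD(4)[OF assms]]
  by (simp add: comp_def frechet_derivative_minus)

lemma FN_Pdiag_closed_0_form:
  assumes K: "K \<in> vvform 0" and closed: "FN 1 0 Pdiag K = (\<lambda>x v. 0)"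
  shows "K = (\<lambda>x v. 0)"
proof (intro ext)
  fix x w
  show "K x w = 0"
  proof (rule vec_eq_iff[THEN iffD2], intro allI)
    fix t
    have "0 = FN 1 0 Pdiag K x (\<lambda>_. axis t 1) $ t"
      using closed by simp
    also have "\<dots> = - comp K t x (drop_arg 0 (\<lambda>_. axis t 1))"
      unfolding FN_Pdiag_component[OF K] by (simp add: sum_coordinate_difference_axis)
    also have "\<dots> = - K x w $ t"
      using vvformD(1)[OF K, where v = "drop_arg 0 (\<lambda>_. axis t 1)" and w = w] by (simp add: comp_def)
    finally show "K x w $ t = 0 $ t" by simp
  qed
qed

lemma FN_Pdiag_diag_contraction:
  assumes K: "K \<in> vvform (Suc k)" and closed: "FN 1 (Suc k) Pdiag K = (\<lambda>x v. 0)"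
  shows "FN 1 k Pdiag (diag_contraction K) = K"
proof (intro ext)
  fix x v
  show "FN 1 k Pdiag (diag_contraction K) x v = K x v"
  proof (rule vec_eq_iff[THEN iffD2], intro allI)
    fix t
    let ?w = "\<lambda>i. prepend_arg (axis t 1) (drop_arg i v)"
    define T where "T i = (\<Sum>j\<in>UNIV. (x $ j - x $ t) * v i $ j * lie j (comp K t) x (?w i))
        - v i $ t * comp K t x (?w i)" for i
    \<comment> \<open>closedness on (d/dx^t, v 0, ..., v k): the summand i = 0 is -K^t(v), the others
      are exactly the summands of [P, L]^t(v)\<close>
    have "0 = FN 1 (Suc k) Pdiag K x (prepend_arg (axis t 1) v) $ t"
      using closed by simp
    also have "\<dots> = - comp K t x v - (\<Sum>i\<le>k. (-1) ^ i * T i)"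
      unfolding FN_Pdiag_component[OF K] sum.atMost_Suc_shift
      by (simp add: T_def sum_coordinate_difference_axis sum_negf)
    finally have "K x v $ t = - (\<Sum>i\<le>k. (-1) ^ i * T i)"
      by (simp add: comp_def)
    moreover have "FN 1 k Pdiag (diag_contraction K) x v $ t = - (\<Sum>i\<le>k. (-1) ^ i * T i)"
      unfolding FN_Pdiag_component[OF diag_contraction_vvform[OF K]] lie_comp_diag_contraction[OF K]
      by (simp add: comp_diag_contraction T_def sum_negf distrib_left sum.distrib
          right_diff_distrib sum_subtractf)
    ultimately show "FN 1 k Pdiag (diag_contraction K) x v $ t = K x v $ t"
      by simp
  qed
qed

theorem proposition16p1:
  shows "Pdiag \<in> (vvform 1 :: 'n::finite vform set)
    \<and> FN 1 1 (Pdiag :: 'n vform) Pdiag = (\<lambda>x v. 0)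
    \<and> (\<forall>k. \<forall>K \<in> (vvform k :: 'n vform set). FN 1 k Pdiag K = (\<lambda>x v. 0) \<longrightarrow>
          (if k = 0 then K = (\<lambda>x v. 0)
           else (\<exists>L \<in> vvform (k - 1). FN 1 (k - 1) Pdiag L = K)))"
proof (intro conjI allI ballI impI)
  show "Pdiag \<in> (vvform 1 :: 'n vform set)"
    by (rule Pdiag_vvform)
  show "FN 1 1 (Pdiag :: 'n vform) Pdiag = (\<lambda>x v. 0)"
    by (rule FN_Pdiag_Pdiag)
  fix k and K :: "'n vform"
  assume K: "K \<in> vvform k" and closed: "FN 1 k Pdiag K = (\<lambda>x v. 0)"
  show "if k = 0 then K = (\<lambda>x v. 0) else (\<exists>L \<in> vvform (k - 1). FN 1 (k - 1) Pdiag L = K)"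
  proof (cases k)
    case 0
    with K closed show ?thesis
      using FN_Pdiag_closed_0_form by simp
  next
    case (Suc k')
    with K closed have K': "K \<in> vvform (Suc k')" and closed': "FN 1 (Suc k') Pdiag K = (\<lambda>x v. 0)"
      by simp_all
    show ?thesis
      using Suc diag_contraction_vvform[OF K'] FN_Pdiag_diag_contraction[OF K' closed'] by auto
  qed
qed

end
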